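(* Let $q=4$, $k\ge1$, $S_{2k}=x+x^q+\cdots+x^{q^{2k-1}}\in\mathbb{F}_2[x]$, and $g(x)=x+S_{2k}(x)^{q^{2k}}+S_{2k}(x)^{q^k+3}$. Let $c\in\mathbb{F}_{q^{3k}}$ and $a=c+c^{q^k}$. Then for every $x\in\mathbb{F}_{q^{3k}}$, \[ \mathrm{Tr}\bigl(a\,g(x)\bigr)=\mathrm{Tr}\bigl(c\,S_{2k}(x)^{1+2q^k+q^{2k}}\bigr), \] where $\mathrm{Tr}=\mathrm{Tr}_{q^{3k}/2}$ is the absolute trace of $\mathbb{F}_{q^{3k}}$ to $\mathbb{F}_2$.
   Context: $\mathbb{F}_m$ denotes the finite field with $m$ elements. $\mathrm{Tr}_{q^{3k}/2}(z)=\sum_{i=0}^{6k-1}z^{2^i}$ for $z\in\mathbb{F}_{4^{3k}}$. *)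

theory Defs
  imports Main
begin

definition absTr :: "nat \<Rightarrow> 'a::field \<Rightarrow> 'a" where
  "absTr k z = (\<Sum>i<6*k. z ^ (2^i))"

definition S2k :: "nat \<Rightarrow> 'a::field \<Rightarrow> 'a" where
  "S2k k x = (\<Sum>i<2*k. x ^ (4^i))"

definition gfun :: "nat \<Rightarrow> 'a::field \<Rightarrow> 'a" where
  "gfun k x = x + (S2k k x) ^ (4^(2*k)) + (S2k k x) ^ (4^k + 3)"

end

theory Submission
  imports Defs "HOL-Number_Theory.Residues"
begin

text \<open>Write \<open>Q = q^k\<close>. In characteristic 2 the trace is additive and invariant under
  squaring, so \<open>Tr(c^Q g) = Tr(c g^{Q^2})\<close> and the left-hand side equals
  \<open>Tr(c (g + g^{Q^2}))\<close>. Put \<open>A = S_{2k}(x)\<close> and \<open>B = A^Q\<close>. Splitting \<open>S_{2k} = t + t^Q\<close>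
  with \<open>t = x + x^q + \<dots> + x^{q^{k-1}}\<close> and using \<open>t^{Q^3} = t\<close> gives \<open>A^{Q^2} = A + B\<close>,
  and telescoping gives \<open>A + A^4 = x + x^{Q^2}\<close>. With these two relations,
  \<open>g + g^{Q^2} = A B^2 A^{Q^2} = S_{2k}^{1+2Q+Q^2}\<close> becomes a polynomial identity in \<open>A\<close> and \<open>B\<close>.\<close>

lemma power_card_minus_one_eq_one:
  fixes x :: "'a::{field,finite}"
  assumes "x \<noteq> 0"
  shows "x ^ (card (UNIV :: 'a set) - 1) = 1"
proof -
  let ?U = "UNIV - {0 :: 'a}"
  have "bij_betw ((*) x) ?U ?U"
    using assms by (intro bij_betwI[where g = "\<lambda>y. y / x"]) auto
  then have "(\<Prod>y\<in>?U. x * y) = (\<Prod>y\<in>?U. y)"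
    using prod.reindex_bij_betw[of "(*) x" ?U ?U "\<lambda>y. y"] by simp
  then have "(\<Prod>y\<in>?U. y) = x ^ card ?U * (\<Prod>y\<in>?U. y)"
    by (simp add: prod.distrib)
  moreover have "(\<Prod>y\<in>?U. y) \<noteq> 0"
    by simp
  ultimately have "x ^ card ?U = 1"
    by simp
  moreover have "card ?U = card (UNIV :: 'a set) - 1"
    by (rule card_Diff_singleton) simp
  ultimately show ?thesis
    by simp
qed

lemma power_card_eq_self:
  fixes x :: "'a::{field,finite}"
  shows "x ^ card (UNIV :: 'a set) = x"
proof (cases "x = 0")
  case False
  have "x ^ card (UNIV :: 'a set) = x * x ^ (card (UNIV :: 'a set) - 1)"
    by (simp add: power_eq_if)
  with power_card_minus_one_eq_one[OF False] show ?thesis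
    by simp
qed (simp add: finite_UNIV_card_ge_0)

lemma CHAR_eq_2_if_card_eq_power_2:
  assumes "card (UNIV :: 'a::{field,finite} set) = 2 ^ n"
  shows "CHAR('a) = 2"
proof -
  have "prime CHAR('a)"
    by (intro prime_CHAR_semidom finite_imp_CHAR_pos) simp
  moreover have "CHAR('a) dvd 2 ^ n"
    using CHAR_dvd_CARD[where 'a = 'a] assms by simp
  ultimately have "CHAR('a) dvd 2"
    using prime_dvd_power by blast
  with \<open>prime CHAR('a)\<close> show ?thesis
    using primes_dvd_imp_eq[of "CHAR('a)" 2] by simp
qed

lemma add_power_4_power:
  assumes "CHAR('a::comm_semiring_1) = 2"
  shows "(x + y :: 'a) ^ 4 ^ n = x ^ 4 ^ n + y ^ 4 ^ n"
proof (rule freshmans_dream')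
  show "4 ^ n = CHAR('a) ^ (2 * n)"
    by (simp add: assms power_mult)
qed (simp add: assms)

lemma sum_power_4_power:
  assumes "CHAR('a::comm_semiring_1) = 2"
  shows "sum f A ^ 4 ^ n = (\<Sum>i\<in>A. (f i :: 'a) ^ 4 ^ n)"
proof (rule freshmans_dream_sum')
  show "4 ^ n = CHAR('a) ^ (2 * n)"
    by (simp add: assms power_mult)
qed (simp add: assms)

lemma absTr_add:
  assumes "CHAR('a::field) = 2"
  shows "absTr k (y + z :: 'a) = absTr k y + absTr k z"
  unfolding absTr_def by (simp add: freshmans_dream' assms sum.distrib)

lemma absTr_square:
  assumes "(y :: 'a::field) ^ 2 ^ (6 * k) = y"
  shows "absTr k (y ^ 2) = absTr k y"
proof -
  have "absTr k (y ^ 2) + y = (\<Sum>i<6 * k. y ^ 2 ^ Suc i) + y ^ 2 ^ 0"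
    unfolding absTr_def by (simp add: power_mult[symmetric] mult.commute)
  also have "\<dots> = (\<Sum>i<Suc (6 * k). y ^ 2 ^ i)"
    by (subst sum.lessThan_Suc_shift) simp
  also have "\<dots> = absTr k y + y"
    unfolding absTr_def using assms by simp
  finally show ?thesis
    by simp
qed

lemma absTr_power_2_power:
  assumes "(y :: 'a::field) ^ 2 ^ (6 * k) = y"
  shows "absTr k (y ^ 2 ^ j) = absTr k y"
proof (induction j)
  case (Suc j)
  have "(y ^ 2 ^ j) ^ 2 ^ (6 * k) = y ^ 2 ^ j"
    by (metis assms power_mult mult.commute)
  then show ?case
    by (metis Suc absTr_square power_Suc power_mult mult.commute)
qed simp

lemma add_self_CHAR_2:
  assumes "CHAR('a::ring_1) = 2"
  shows "(x :: 'a) + x = 0"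
  using uminus_CHAR_2[OF assms, of x] by (metis add.right_inverse)

lemma sum_lessThan_add:
  fixes m n :: nat
  shows "(\<Sum>i<m + n. f i) = (\<Sum>i<m. f i) + (\<Sum>i<n. f (i + m) :: 'a::comm_monoid_add)"
  by (induction n) (simp_all add: add_ac)

lemma S2k_eq_add_power_4_power:
  assumes "CHAR('a::field) = 2"
  shows "S2k k x = (\<Sum>i<k. x ^ 4 ^ i) + (\<Sum>i<k. (x :: 'a) ^ 4 ^ i) ^ 4 ^ k"
proof -
  have "(\<Sum>i<k. x ^ 4 ^ i) ^ 4 ^ k = (\<Sum>i<k. x ^ 4 ^ (i + k))"
    by (simp add: sum_power_4_power[OF assms] power_add flip: power_mult)
  then show ?thesis
    unfolding S2k_def by (simp add: mult_2 sum_lessThan_add)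
qed

lemma S2k_power_4_power_2k:
  assumes char: "CHAR('a::field) = 2" and frob: "(x :: 'a) ^ 4 ^ (3 * k) = x"
  shows "S2k k x ^ 4 ^ (2 * k) = S2k k x + S2k k x ^ 4 ^ k"
proof -
  define t where "t = (\<Sum>i<k. x ^ 4 ^ i)"
  have "t ^ 4 ^ (3 * k) = t"
    unfolding t_def sum_power_4_power[OF char]
    by (metis (no_types) frob power_mult mult.commute)
  then have "t ^ (4 ^ k * 4 ^ (2 * k)) = t"
    by (simp flip: power_add)
  then have "S2k k x ^ 4 ^ (2 * k) = t ^ 4 ^ (2 * k) + t"
    by (simp add: S2k_eq_add_power_4_power[OF char] t_def[symmetric] add_power_4_power[OF char]
        flip: power_mult)
  also have "\<dots> = S2k k x + S2k k x ^ 4 ^ k"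
    by (simp add: S2k_eq_add_power_4_power[OF char] t_def[symmetric] add_power_4_power[OF char]
        add_self_CHAR_2[OF char] power_add mult_2 flip: power_mult)
  finally show ?thesis .
qed

lemma S2k_add_power_4:
  assumes char: "CHAR('a::field) = 2"
  shows "S2k k x + S2k k x ^ 4 = (x :: 'a) + x ^ 4 ^ (2 * k)"
proof -
  have "S2k k x ^ 4 = (\<Sum>i<2 * k. (x ^ 4 ^ i) ^ 4)"
    unfolding S2k_def using sum_power_4_power[OF char, of _ _ 1] by simp
  also have "\<dots> = (\<Sum>i<2 * k. x ^ 4 ^ Suc i)"
    by (simp only: power_Suc2 power_mult)
  finally have "S2k k x ^ 4 - S2k k x = (\<Sum>i<2 * k. x ^ 4 ^ Suc i - x ^ 4 ^ i)"
    unfolding S2k_def by (simp only: sum_subtractf)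
  also have "\<dots> = x ^ 4 ^ (2 * k) - x"
    using sum_lessThan_telescope[of "\<lambda>i. x ^ 4 ^ i" "2 * k"] by simp
  finally show ?thesis
    by (simp add: minus_CHAR_2[OF char] add.commute)
qed

text \<open>With \<open>A + B = A^{Q^2}\<close> and \<open>y = x^{Q^2}\<close>, the two brackets are \<open>g(x)\<close> and \<open>g(x)^{Q^2}\<close>.\<close>

lemma CHAR_2_gfun_identity:
  fixes A B x y :: "'a::comm_ring_1"
  assumes "CHAR('a) = 2" and "A + A ^ 4 = x + y"
  shows "(x + (A + B) + B * A ^ 3) + (y + B + A * (A + B) ^ 3) = A * B ^ 2 * (A + B)"
proof -
  have two: "(2 :: 'a) = 0"
    using of_nat_CHAR[where 'a = 'a] assms(1) by simp
  have y: "y = A + A ^ 4 - x"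
    using assms(2) by (simp add: algebra_simps)
  have "(x + (A + B) + B * A ^ 3) + (y + B + A * (A + B) ^ 3)
      = A * B ^ 2 * (A + B) + 2 * (A + B + A ^ 4 + 2 * A ^ 3 * B + A ^ 2 * B ^ 2)"
    unfolding y by (simp add: algebra_simps eval_nat_numeral)
  with two show ?thesis
    by simp
qed

lemma gfun_add_power_4_power_2k:
  fixes x :: "'a::field"
  assumes char: "CHAR('a) = 2" and frob: "\<And>y :: 'a. y ^ 4 ^ (3 * k) = y"
  shows "gfun k x + gfun k x ^ 4 ^ (2 * k) = S2k k x ^ (1 + 2 * 4 ^ k + 4 ^ (2 * k))"
proof -
  define A where "A = S2k k x"
  define B where "B = A ^ 4 ^ k"
  have exp: "(4 :: nat) ^ (3 * k) = 4 ^ k * 4 ^ (2 * k)"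
    by (simp flip: power_add)
  have A_conj: "A ^ 4 ^ (2 * k) = A + B"
    unfolding A_def B_def by (rule S2k_power_4_power_2k[OF char frob])
  have B_conj: "B ^ 4 ^ (2 * k) = A"
    using exp frob[of A] by (simp only: B_def power_mult)
  have g: "gfun k x = x + (A + B) + B * A ^ 3"
    by (simp add: gfun_def A_def[symmetric] A_conj B_def power_add)
  have "gfun k x ^ 4 ^ (2 * k) = x ^ 4 ^ (2 * k) + B + A * (A + B) ^ 3"
  proof -
    have "(A + B) ^ 4 ^ (2 * k) = B"
      using add_self_CHAR_2[OF char, of A]
      by (simp add: add_power_4_power[OF char] A_conj B_conj add.assoc[symmetric])
    moreover have "(A ^ 3) ^ 4 ^ (2 * k) = (A + B) ^ 3"
      by (metis A_conj power_mult mult.commute)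
    ultimately show ?thesis
      by (simp add: g add_power_4_power[OF char] power_mult_distrib B_conj)
  qed
  then have "gfun k x + gfun k x ^ 4 ^ (2 * k)
      = (x + (A + B) + B * A ^ 3) + (x ^ 4 ^ (2 * k) + B + A * (A + B) ^ 3)"
    by (simp only: g)
  also have "\<dots> = A * B ^ 2 * (A + B)"
    using char S2k_add_power_4[OF char] unfolding A_def by (rule CHAR_2_gfun_identity)
  also have "\<dots> = S2k k x ^ (1 + 2 * 4 ^ k + 4 ^ (2 * k))"
    unfolding A_def[symmetric] power_add power_one_right mult.commute[of 2 "4 ^ k"]
      power_mult[of A "4 ^ k" 2] B_def[symmetric] A_conj ..
  finally show ?thesis .
qed

lemma absTr_power_4_power_mult:
  fixes c z :: "'a::field"
  assumes frob: "\<And>y :: 'a. y ^ 4 ^ (3 * k) = y"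
  shows "absTr k (c ^ 4 ^ k * z) = absTr k (c * z ^ 4 ^ (2 * k))"
proof -
  have two_pow: "(2 :: nat) ^ (6 * k) = 4 ^ (3 * k)" "(2 :: nat) ^ (4 * k) = 4 ^ (2 * k)"
    by (simp_all add: power_mult)
  have "(4 :: nat) ^ (3 * k) = 4 ^ k * 4 ^ (2 * k)"
    by (simp flip: power_add)
  then have c_conj: "(c ^ 4 ^ k) ^ 4 ^ (2 * k) = c"
    using frob[of c] by (simp only: power_mult)
  have "absTr k (c ^ 4 ^ k * z) = absTr k ((c ^ 4 ^ k * z) ^ 2 ^ (4 * k))"
    using absTr_power_2_power[of "c ^ 4 ^ k * z" k "4 * k"] frob by (simp add: two_pow)
  also have "(c ^ 4 ^ k * z) ^ 2 ^ (4 * k) = c * z ^ 4 ^ (2 * k)"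
    by (simp add: two_pow power_mult_distrib c_conj)
  finally show ?thesis .
qed

theorem mainTheorem5:
  fixes k :: nat and c :: "'a::{field,finite}"
  assumes "k \<ge> 1"
    and "card (UNIV :: 'a set) = 4 ^ (3*k)"
  shows "\<forall>x::'a. absTr k ((c + c ^ (4^k)) * gfun k x)
           = absTr k (c * (S2k k x) ^ (1 + 2 * 4^k + 4^(2*k)))"
proof
  fix x :: 'a
  have char: "CHAR('a) = 2"
    using assms(2) by (intro CHAR_eq_2_if_card_eq_power_2[where n = "6 * k"]) (simp add: power_mult)
  have frob: "\<And>y :: 'a. y ^ 4 ^ (3 * k) = y"
    using power_card_eq_self assms(2) by metis
  have "absTr k ((c + c ^ 4 ^ k) * gfun k x)
      = absTr k (c * gfun k x) + absTr k (c * gfun k x ^ 4 ^ (2 * k))"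
    by (simp add: distrib_right absTr_add[OF char] absTr_power_4_power_mult[OF frob])
  also have "\<dots> = absTr k (c * (gfun k x + gfun k x ^ 4 ^ (2 * k)))"
    by (simp add: distrib_left absTr_add[OF char])
  finally show "absTr k ((c + c ^ 4 ^ k) * gfun k x)
      = absTr k (c * S2k k x ^ (1 + 2 * 4 ^ k + 4 ^ (2 * k)))"
    by (simp only: gfun_add_power_4_power_2k[OF char frob])
qed

end
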